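(* Let $m\ge 3$, let $M$ be a set of $m$ parties and $p\ge 0$ an integer, and let $|\Psi\rangle=|\Psi_m^+\rangle^{\otimes p}$, where each party holds one qubit of each copy. Then $\max_{\rho\in\Gamma(\Psi)}S(\rho)=p$, where $\Gamma(\Psi)$ is the set of density operators $\rho$ on the $mp$ qubits with $\mathrm{Tr}_\alpha\rho=\mathrm{Tr}_\alpha|\Psi\rangle\langle\Psi|$ for every party $\alpha\in M$, and $S(\rho)=-\mathrm{Tr}\,\rho\log_2\rho$.
   Context: $|\Psi_m^+\rangle=\frac{1}{\sqrt2}(|0\rangle^{\otimes m}+|1\rangle^{\otimes m})$ is the $m$-qubit GHZ state. $\mathrm{Tr}_\alpha$ denotes the partial trace over all qubits held by party $\alpha$ (here, $p$ qubits). *)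

theory Defs
  imports Complex_Main "Jordan_Normal_Form.Char_Poly"
begin

(* Qubits of an N-qubit register are numbered 0..<N; computational basis state
   with index i < 2^N has qubit q in state bit q i. *)
definition bit_of :: "nat \<Rightarrow> nat \<Rightarrow> nat" where
  "bit_of q i = (i div 2 ^ q) mod 2"

definition pos_in :: "nat set \<Rightarrow> nat \<Rightarrow> nat" where
  "pos_in S q = card {x \<in> S. x < q}"

(* Full basis index obtained from an index r of the kept qubits K
   and an index t of the traced qubits T = {0..<N} - K. *)
definition merge_idx :: "nat \<Rightarrow> nat set \<Rightarrow> nat \<Rightarrow> nat \<Rightarrow> nat" where
  "merge_idx N T r t =
     (\<Sum>q<N. (if q \<in> T then bit_of (pos_in T q) t
              else bit_of (pos_in ({0..<N} - T) q) r) * 2 ^ q)"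

(* Partial trace over the qubits in T of an operator on N qubits;
   the result acts on the remaining qubits (ordered increasingly). *)
definition ptrace :: "nat \<Rightarrow> nat set \<Rightarrow> complex mat \<Rightarrow> complex mat" where
  "ptrace N T \<rho> =
     mat (2 ^ card ({0..<N} - T)) (2 ^ card ({0..<N} - T))
       (\<lambda>(r, r'). \<Sum>t < 2 ^ card T. \<rho> $$ (merge_idx N T r t, merge_idx N T r' t))"

definition density_op :: "nat \<Rightarrow> complex mat \<Rightarrow> bool" where
  "density_op N \<rho> \<longleftrightarrow> \<rho> \<in> carrier_mat (2 ^ N) (2 ^ N) \<and>
     (\<forall>v :: nat \<Rightarrow> complex.
        let q = (\<Sum>i < 2 ^ N. \<Sum>j < 2 ^ N. cnj (v i) * \<rho> $$ (i, j) * v j)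
        in Im q = 0 \<and> Re q \<ge> 0) \<and>
     (\<Sum>i < 2 ^ N. \<rho> $$ (i, i)) = 1"

(* von Neumann entropy: - sum over eigenvalues (with algebraic multiplicity,
   i.e. as roots of the characteristic polynomial) of lambda log2 lambda,
   with the convention 0 log 0 = 0. Eigenvalues of density operators are real. *)
definition xlogx :: "real \<Rightarrow> real" where
  "xlogx x = (if x = 0 then 0 else x * log 2 x)"

definition vn_entropy :: "complex mat \<Rightarrow> real" where
  "vn_entropy \<rho> = - (\<Sum>a \<in> {a. poly (char_poly \<rho>) a = 0}.
                        real (order a (char_poly \<rho>)) * xlogx (Re a))"

definition ghz_amp :: "nat \<Rightarrow> nat \<Rightarrow> complex" where
  "ghz_amp m b = (if b = 0 \<or> b = 2 ^ m - 1 then complex_of_real (1 / sqrt 2) else 0)"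

(* Layout: copy j (j < p) occupies qubits j*m .. j*m+m-1; qubit j*m + a of it
   is held by party a (a < m). Amplitudes of |GHZ_m>^{\<otimes>p} on m*p qubits. *)
definition ghz_power_amp :: "nat \<Rightarrow> nat \<Rightarrow> nat \<Rightarrow> complex" where
  "ghz_power_amp m p i = (\<Prod>j<p. ghz_amp m ((i div 2 ^ (m * j)) mod 2 ^ m))"

definition ghz_power_dm :: "nat \<Rightarrow> nat \<Rightarrow> complex mat" where
  "ghz_power_dm m p = mat (2 ^ (m * p)) (2 ^ (m * p))
     (\<lambda>(i, j). ghz_power_amp m p i * cnj (ghz_power_amp m p j))"

definition party_qubits :: "nat \<Rightarrow> nat \<Rightarrow> nat \<Rightarrow> nat set" where
  "party_qubits m p a = {j * m + a | j. j < p}"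

definition compatible_states :: "nat \<Rightarrow> nat \<Rightarrow> complex mat set" where
  "compatible_states m p = {\<rho>. density_op (m * p) \<rho> \<and>
     (\<forall>a < m. ptrace (m * p) (party_qubits m p a) \<rho> =
               ptrace (m * p) (party_qubits m p a) (ghz_power_dm m p))}"

end

theory Submission
  imports Defs "Jordan_Normal_Form.Schur_Decomposition"
begin

text \<open>Call a basis index a GHZ index if, in every copy, its \<open>m\<close> qubits agree; there are
  \<open>2\<^sup>p\<close> of them. Upper bound: if \<open>\<rho>\<close> had weight on a non-GHZ index, some copy has two
  disagreeing qubits, and a third party holds neither of them. Tracing out that party keeps the
  disagreement visible, so the reduced diagonal entry of \<open>\<rho>\<close> is positive while that of
  \<open>|\<Psi>\<rangle>\<langle>\<Psi>|\<close> vanishes. Hence \<open>\<rho>\<close> is supported on the \<open>2\<^sup>p\<close> GHZ indices and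
  \<open>S(\<rho>) \<le> p\<close> by Gibbs' inequality. Lower bound: two distinct GHZ indices differ on a
  whole copy, hence on the qubit of every party, so removing the off-diagonal part of
  \<open>|\<Psi>\<rangle>\<langle>\<Psi>|\<close> does not change any single-party marginal; the resulting uniform mixture
  has entropy \<open>p\<close>.\<close>

section \<open>Eigenvalues and von Neumann entropy\<close>

lemma poly_prod_linear_eq_0_iff:
  fixes x :: "'a::idom"
  shows "poly (\<Prod>a\<leftarrow>as. [:- a, 1:]) x = 0 \<longleftrightarrow> x \<in> set as"
  by (induction as) auto

lemma order_prod_linear:
  fixes x :: "'a::idom"
  shows "Polynomial.order x (\<Prod>a\<leftarrow>as. [:- a, 1:]) = count_list as x"
proof (induction as)
  case Nil
  then show ?case by (simp add: order_0I)
next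
  case (Cons b as)
  have "(\<Prod>a\<leftarrow>b # as. [:- a, 1:]) \<noteq> 0"
    by (subst prod_list_zero_iff) auto
  then have "Polynomial.order x (\<Prod>a\<leftarrow>b # as. [:- a, 1:]) =
             Polynomial.order x [:- b, 1:] + Polynomial.order x (\<Prod>a\<leftarrow>as. [:- a, 1:])"
    unfolding list.map prod_list.Cons by (rule order_mult)
  moreover have "Polynomial.order x [:- b, 1:] = of_bool (x = b)"
    using order_power_n_n[of b 1] by (auto simp: order_0I)
  ultimately show ?case using Cons.IH by simp
qed

lemma sum_list_map_eq_sum_count_of_nat:
  fixes f :: "'a \<Rightarrow> 'b::semiring_1"
  shows "sum_list (map f xs) = (\<Sum>x\<in>set xs. of_nat (count_list xs x) * f x)"
proof (induction xs)
  case Nil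
  then show ?case by simp
next
  case (Cons y xs)
  have "(\<Sum>x\<in>set (y # xs). of_nat (count_list (y # xs) x) * f x) =
        (\<Sum>x\<in>insert y (set xs). of_nat (count_list xs x) * f x + of_bool (x = y) * f x)"
    by (intro sum.cong) (auto simp: algebra_simps)
  also have "\<dots> = f y + (\<Sum>x\<in>set xs. of_nat (count_list xs x) * f x)"
    by (simp add: sum.distrib sum.insert_if count_list_0_iff add.commute)
  finally show ?case using Cons.IH by simp
qed

lemma Re_sum_list: "Re (sum_list xs) = (\<Sum>x\<leftarrow>xs. Re x)"
  by (induction xs) auto

lemma vn_entropy_eq_sum_list:
  assumes "char_poly A = (\<Prod>a\<leftarrow>es. [:- a, 1:])"
  shows "vn_entropy A = - (\<Sum>a\<leftarrow>es. xlogx (Re a))"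
proof -
  have "{a. poly (char_poly A) a = 0} = set es"
    using assms poly_prod_linear_eq_0_iff by auto
  then show ?thesis
    unfolding vn_entropy_def assms
    by (simp add: order_prod_linear sum_list_map_eq_sum_count_of_nat)
qed

lemma diag_sum_similar:
  fixes A B P Q :: "'a::comm_semiring_1 mat"
  assumes "similar_mat_wit A B P Q" "A \<in> carrier_mat n n"
  shows "(\<Sum>i<n. A $$ (i, i)) = (\<Sum>i<n. B $$ (i, i))"
proof -
  from similar_mat_witD2[OF assms(2,1)]
  have B: "B \<in> carrier_mat n n" and P: "P \<in> carrier_mat n n" and Q: "Q \<in> carrier_mat n n"
    and QP: "Q * P = 1\<^sub>m n" and AB: "A = P * (B * Q)"
    by (auto simp: assoc_mult_mat)
  have "(\<Sum>i<n. A $$ (i, i)) = (\<Sum>i<n. \<Sum>k<n. \<Sum>l<n. P $$ (i, k) * B $$ (k, l) * Q $$ (l, i))"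
    using B P Q unfolding AB
    by (intro sum.cong refl) (auto simp: scalar_prod_def lessThan_atLeast0 sum_distrib_left mult_ac)
  also have "\<dots> = (\<Sum>k<n. \<Sum>l<n. \<Sum>i<n. P $$ (i, k) * B $$ (k, l) * Q $$ (l, i))"
    by (subst sum.swap) (intro sum.cong refl sum.swap)
  also have "\<dots> = (\<Sum>k<n. \<Sum>l<n. B $$ (k, l) * (\<Sum>i<n. Q $$ (l, i) * P $$ (i, k)))"
    by (simp add: sum_distrib_left mult_ac)
  also have "\<dots> = (\<Sum>k<n. \<Sum>l<n. B $$ (k, l) * (Q * P) $$ (l, k))"
    using P Q by (intro sum.cong refl) (auto simp: scalar_prod_def lessThan_atLeast0)
  also have "\<dots> = (\<Sum>k<n. B $$ (k, k))"
    unfolding QP by (intro sum.cong refl) (simp add: if_distrib cong: if_cong)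
  finally show ?thesis .
qed

lemma sum_eigenvalues_eq_diag_sum:
  fixes A :: "'a::conjugatable_ordered_field mat"
  assumes A: "A \<in> carrier_mat n n" and es: "char_poly A = (\<Prod>a\<leftarrow>es. [:- a, 1:])"
  shows "sum_list es = (\<Sum>i<n. A $$ (i, i))"
proof -
  obtain B P Q where "schur_decomposition A es = (B, P, Q)"
    by (cases "schur_decomposition A es") auto
  from schur_decomposition[OF A es this]
  have sim: "similar_mat_wit A B P Q" and diag: "diag_mat B = es" by auto
  have "B \<in> carrier_mat n n" using similar_mat_witD2[OF A sim] by auto
  then have "sum_list es = (\<Sum>i<n. B $$ (i, i))"
    unfolding diag[symmetric] diag_mat_def by (simp add: sum_list_sum_nth atLeast0LessThan)
  also have "\<dots> = (\<Sum>i<n. A $$ (i, i))"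
    using diag_sum_similar[OF sim A] by simp
  finally show ?thesis .
qed

lemma neg_xlogx_le:
  fixes x n :: real
  assumes "x \<ge> 0" "n > 0"
  shows "- xlogx x \<le> (1 / n - x + x * ln n) / ln 2"
proof (cases "x = 0")
  case True
  then show ?thesis using assms by (simp add: xlogx_def)
next
  case False
  then have x: "x > 0" using assms by simp
  have "x * ln (1 / (n * x)) \<le> x * (1 / (n * x) - 1)"
    using x assms by (intro mult_left_mono ln_le_minus_one) auto
  moreover have "ln (1 / (n * x)) = - ln n - ln x"
    using x assms by (simp add: ln_div ln_mult)
  ultimately have "- x * ln x \<le> 1 / n - x + x * ln n"
    using x assms by (simp add: algebra_simps)
  then show ?thesis
    using x unfolding xlogx_def log_def by (simp add: divide_right_mono field_simps)
qed

lemma entropy_le_log_length: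
  assumes "\<And>x. x \<in> set xs \<Longrightarrow> x \<ge> 0" "sum_list xs = 1"
  shows "- (\<Sum>x\<leftarrow>xs. xlogx x) \<le> log 2 (length xs)"
proof -
  define n where "n = length xs"
  have n: "n > 0" using assms(2) unfolding n_def by (cases xs) auto
  have "- (\<Sum>x\<leftarrow>xs. xlogx x) = (\<Sum>x\<leftarrow>xs. - xlogx x)"
    by (induction xs) auto
  also have "\<dots> \<le> (\<Sum>x\<leftarrow>xs. (1 / n - x + x * ln n) / ln 2)"
    using assms(1) n by (intro sum_list_mono neg_xlogx_le) auto
  also have "\<dots> = (\<Sum>i<n. (1 / n - xs ! i + xs ! i * ln n) / ln 2)"
    unfolding n_def by (simp add: sum_list_sum_nth atLeast0LessThan)
  also have "\<dots> = (n * (1 / n) - (\<Sum>i<n. xs ! i) + (\<Sum>i<n. xs ! i) * ln n) / ln 2"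
    by (simp add: sum_divide_distrib[symmetric] sum.distrib sum_subtractf sum_distrib_right)
  also have "(\<Sum>i<n. xs ! i) = 1"
    using assms(2) unfolding n_def by (simp add: sum_list_sum_nth atLeast0LessThan)
  finally show ?thesis using n unfolding n_def log_def by simp
qed

section \<open>Positive semidefinite matrices\<close>

definition qform :: "nat \<Rightarrow> complex mat \<Rightarrow> (nat \<Rightarrow> complex) \<Rightarrow> complex" where
  "qform n A v = (\<Sum>i<n. \<Sum>j<n. cnj (v i) * A $$ (i, j) * v j)"

definition psd :: "nat \<Rightarrow> complex mat \<Rightarrow> bool" where
  "psd n A \<longleftrightarrow> (\<forall>v. Im (qform n A v) = 0 \<and> Re (qform n A v) \<ge> 0)"

lemma density_op_iff:
  "density_op N \<rho> \<longleftrightarrow>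
     \<rho> \<in> carrier_mat (2 ^ N) (2 ^ N) \<and> psd (2 ^ N) \<rho> \<and> (\<Sum>i < 2 ^ N. \<rho> $$ (i, i)) = 1"
  unfolding density_op_def psd_def qform_def Let_def by blast

lemma qform_supported:
  assumes "S \<subseteq> {..<n}" "\<And>k. k \<notin> S \<Longrightarrow> v k = 0"
  shows "qform n A v = (\<Sum>i\<in>S. \<Sum>j\<in>S. cnj (v i) * A $$ (i, j) * v j)"
  unfolding qform_def using assms
  by (intro sum.mono_neutral_cong_right) (auto intro!: sum.mono_neutral_cong_right sum.neutral)

lemma qform_indicator:
  assumes "i < n"
  shows "qform n A (\<lambda>k. of_bool (k = i)) = A $$ (i, i)"
  using assms by (subst qform_supported[of "{i}"]) auto

lemma qform_two_point:
  assumes "i < n" "j < n" "i \<noteq> j"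
  shows "qform n A (\<lambda>k. if k = i then c else of_bool (k = j)) =
         cnj c * A $$ (i, i) * c + cnj c * A $$ (i, j) + A $$ (j, i) * c + A $$ (j, j)"
  using assms by (subst qform_supported[of "{i, j}"]) auto

lemma psd_diag_nonneg:
  assumes "psd n A" "i < n"
  shows "Im (A $$ (i, i)) = 0 \<and> Re (A $$ (i, i)) \<ge> 0"
  using assms qform_indicator[of i n A] unfolding psd_def by metis

text \<open>When \<open>A $$ (i, i) = 0\<close> the form is affine along lines through \<open>e\<^sub>j\<close> in direction
  \<open>e\<^sub>i\<close>, and a nonnegative affine function on a line is constant.\<close>

lemma psd_zero_diag:
  assumes psd: "psd n A" and ij: "i < n" "j < n" and zero: "A $$ (i, i) = 0"
  shows "A $$ (i, j) = 0 \<and> A $$ (j, i) = 0"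
proof (cases "i = j")
  case True
  then show ?thesis using zero by simp
next
  case False
  define L where "L c = cnj c * A $$ (i, j) + A $$ (j, i) * c" for c
  define d where "d = A $$ (j, j)"
  have line: "Im (t * L c + d) = 0 \<and> Re (t * L c + d) \<ge> 0" for t :: real and c
  proof -
    have "qform n A (\<lambda>k. if k = i then of_real t * c else of_bool (k = j)) = t * L c + d"
      using qform_two_point[OF ij False] zero by (simp add: L_def d_def algebra_simps)
    then show ?thesis using psd unfolding psd_def by metis
  qed
  have "L c = 0" for c
  proof -
    have "Im (L c) = 0" using line[of 0 c] line[of 1 c] by simp
    moreover have "Re (L c) = 0"
    proof (rule ccontr)
      assume "Re (L c) \<noteq> 0"
      then show False using line[of "- (Re d + 1) / Re (L c)" c] by simp
    qed
    ultimately show ?thesis by (simp add: complex_eq_iff)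
  qed
  from this[of 1] this[of \<i>] show ?thesis
    unfolding L_def by (simp add: complex_eq_iff)
qed

lemma psd_eigenvalue_nonneg:
  assumes psd: "psd n A" and A: "A \<in> carrier_mat n n" and root: "poly (char_poly A) k = 0"
  shows "Im k = 0 \<and> Re k \<ge> 0"
proof -
  obtain v where "eigenvector A v k"
    using eigenvalue_root_char_poly[OF A] root unfolding eigenvalue_def by blast
  then have v: "v \<in> carrier_vec n" "v \<noteq> 0\<^sub>v n" and eig: "A *\<^sub>v v = k \<cdot>\<^sub>v v"
    using A unfolding eigenvector_def by auto
  define S where "S = (\<Sum>i<n. (cmod (v $ i))\<^sup>2)"
  obtain i0 where "i0 < n" "v $ i0 \<noteq> 0"
    using v by (metis eq_vecI index_zero_vec carrier_vecD dim_vec)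
  then have "S > 0"
    unfolding S_def by (intro sum_pos2[of _ i0]) auto
  have eigen: "(\<Sum>j<n. A $$ (i, j) * v $ j) = k * v $ i" if "i < n" for i
    using arg_cong[OF eig, of "\<lambda>w. w $ i"] that A v
    by (simp add: scalar_prod_def atLeast0LessThan mult_ac)
  have "qform n A (\<lambda>i. v $ i) = (\<Sum>i<n. cnj (v $ i) * (\<Sum>j<n. A $$ (i, j) * v $ j))"
    unfolding qform_def by (simp add: sum_distrib_left mult.assoc)
  also have "\<dots> = (\<Sum>i<n. k * (v $ i * cnj (v $ i)))"
    using eigen by (intro sum.cong) auto
  also have "\<dots> = k * of_real S"
    by (simp only: S_def of_real_sum sum_distrib_left complex_norm_square)
  finally have "Im (k * of_real S) = 0 \<and> Re (k * of_real S) \<ge> 0"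
    using psd unfolding psd_def by metis
  then show ?thesis using \<open>S > 0\<close> by (simp add: zero_le_mult_iff)
qed

section \<open>Matrices supported on a set of basis vectors\<close>

lemma similar_mat_reindex:
  fixes A :: "'a::field mat"
  assumes A: "A \<in> carrier_mat n n" and \<sigma>: "bij_betw \<sigma> {..<n} {..<n}"
  shows "similar_mat (mat n n (\<lambda>(i, j). A $$ (\<sigma> i, \<sigma> j))) A"
proof -
  define P :: "'a mat" where "P = mat n n (\<lambda>(i, j). of_bool (j = \<sigma> i))"
  define Q :: "'a mat" where "Q = mat n n (\<lambda>(i, j). of_bool (i = \<sigma> j))"
  have P: "P \<in> carrier_mat n n" and Q: "Q \<in> carrier_mat n n"
    unfolding P_def Q_def by auto
  have \<sigma>n: "\<sigma> i < n" if "i < n" for i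
    using \<sigma> that by (auto dest: bij_betwE)
  have P_mult: "(P * B) $$ (i, j) = B $$ (\<sigma> i, j)" if "B \<in> carrier_mat n n" "i < n" "j < n" for B i j
  proof -
    have "(P * B) $$ (i, j) = (\<Sum>l<n. if l = \<sigma> i then B $$ (l, j) else 0)"
      using that P unfolding P_def by (auto simp: scalar_prod_def atLeast0LessThan intro!: sum.cong)
    then show ?thesis using \<sigma>n[OF \<open>i < n\<close>] by simp
  qed
  have mult_Q: "(B * Q) $$ (i, j) = B $$ (i, \<sigma> j)" if "B \<in> carrier_mat n n" "i < n" "j < n" for B i j
  proof -
    have "(B * Q) $$ (i, j) = (\<Sum>l<n. if l = \<sigma> j then B $$ (i, l) else 0)"
      using that Q unfolding Q_def by (auto simp: scalar_prod_def atLeast0LessThan intro!: sum.cong)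
    then show ?thesis using \<sigma>n[OF \<open>j < n\<close>] by simp
  qed
  have PQ: "P * Q = 1\<^sub>m n"
  proof (rule eq_matI)
    fix i j assume "i < dim_row (1\<^sub>m n)" "j < dim_col (1\<^sub>m n)"
    then have i: "i < n" and j: "j < n" by auto
    have "(P * Q) $$ (i, j) = of_bool (\<sigma> i = \<sigma> j)"
      using P_mult[OF Q i j] \<sigma>n[OF i] j unfolding Q_def by simp
    also have "\<dots> = 1\<^sub>m n $$ (i, j)"
      using i j inj_onD[OF bij_betw_imp_inj_on[OF \<sigma>]] by auto
    finally show "(P * Q) $$ (i, j) = 1\<^sub>m n $$ (i, j)" .
  qed (use P Q in auto)
  have "(P * A * Q) $$ (i, j) = A $$ (\<sigma> i, \<sigma> j)" if "i < n" "j < n" for i j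
    using mult_Q[OF mult_carrier_mat[OF P A] that] P_mult[OF A that(1) \<sigma>n[OF that(2)]] by simp
  then have "mat n n (\<lambda>(i, j). A $$ (\<sigma> i, \<sigma> j)) = P * A * Q"
    using A P Q by (intro eq_matI) auto
  then show ?thesis
    using A P Q PQ mat_mult_left_right_inverse[OF P Q PQ]
    by (intro similar_matI[of _ _ P Q n]) auto
qed

lemma ex_bij_betw_lessThan_first:
  assumes G: "G \<subseteq> {..<n}"
  obtains \<sigma> where "bij_betw \<sigma> {..<n} {..<n}" "\<And>i. i < n \<Longrightarrow> \<sigma> i \<in> G \<longleftrightarrow> i < card G"
proof -
  have fin: "finite G" using G finite_subset by blast
  define ys where "ys = sorted_list_of_set G"
  define zs where "zs = sorted_list_of_set ({..<n} - G)"
  have ys: "set ys = G" "length ys = card G"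
    using fin unfolding ys_def by auto
  have zs: "set zs = {..<n} - G"
    using fin unfolding zs_def by auto
  have "card G \<le> n" using card_mono[OF finite_lessThan G] by simp
  then have "distinct (ys @ zs)" "set (ys @ zs) = {..<n}" "length (ys @ zs) = n"
    using G fin unfolding ys_def zs_def by (auto simp: card_Diff_subset)
  then have "bij_betw ((!) (ys @ zs)) {..<n} {..<n}"
    using bij_betw_nth by metis
  moreover have "(ys @ zs) ! i \<in> G \<longleftrightarrow> i < card G" if "i < n" for i
  proof (cases "i < card G")
    case True
    then show ?thesis using ys nth_mem[of i ys] by (simp add: nth_append)
  next
    case False
    then have "(ys @ zs) ! i \<in> set zs"
      using that ys \<open>length (ys @ zs) = n\<close> nth_mem[of "i - card G" zs] by (simp add: nth_append)
    then show ?thesis using False zs by simp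
  qed
  ultimately show thesis using that by blast
qed

lemma char_poly_zero_mat:
  "char_poly (0\<^sub>m n n :: 'a::comm_ring_1 mat) = (\<Prod>a\<leftarrow>replicate n 0. [:- a, 1:])"
proof -
  have "diag_mat (0\<^sub>m n n :: 'a mat) = replicate n 0"
    unfolding diag_mat_def by (simp add: list_eq_iff_nth_eq)
  then show ?thesis
    using char_poly_upper_triangular[OF zero_carrier_mat] unfolding upper_triangular_def by simp
qed

text \<open>Reindexing puts \<open>G\<close> first and exhibits a block diagonal matrix with a zero second
  block.\<close>

lemma char_poly_vanishing_outside:
  fixes A :: "complex mat"
  assumes A: "A \<in> carrier_mat n n" and G: "G \<subseteq> {..<n}"
    and zero: "\<And>i j. i < n \<Longrightarrow> j < n \<Longrightarrow> i \<notin> G \<or> j \<notin> G \<Longrightarrow> A $$ (i, j) = 0"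
  shows "\<exists>es. length es = card G \<and>
             char_poly A = (\<Prod>a\<leftarrow>es @ replicate (n - card G) 0. [:- a, 1:])"
proof -
  define k where "k = card G"
  have kn: "k \<le> n" unfolding k_def using card_mono[OF finite_lessThan G] by simp
  obtain \<sigma> where \<sigma>: "bij_betw \<sigma> {..<n} {..<n}"
    and \<sigma>G: "\<And>i. i < n \<Longrightarrow> \<sigma> i \<in> G \<longleftrightarrow> i < k"
    using ex_bij_betw_lessThan_first[OF G] unfolding k_def by blast
  define B where "B = mat k k (\<lambda>(i, j). A $$ (\<sigma> i, \<sigma> j))"
  define Z :: "complex mat" where "Z = 0\<^sub>m (n - k) (n - k)"
  have B: "B \<in> carrier_mat k k" and Z: "Z \<in> carrier_mat (n - k) (n - k)"
    unfolding B_def Z_def by auto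
  let ?R = "mat n n (\<lambda>(i, j). A $$ (\<sigma> i, \<sigma> j))"
  have blocks: "?R = four_block_mat B (0\<^sub>m k (n - k)) (0\<^sub>m (n - k) k) Z"
  proof (rule eq_matI)
    fix i j assume "i < dim_row (four_block_mat B (0\<^sub>m k (n - k)) (0\<^sub>m (n - k) k) Z)"
      "j < dim_col (four_block_mat B (0\<^sub>m k (n - k)) (0\<^sub>m (n - k) k) Z)"
    then have i: "i < n" and j: "j < n" using kn B Z by auto
    have "A $$ (\<sigma> i, \<sigma> j) = 0" if "\<not> (i < k \<and> j < k)"
      using zero[of "\<sigma> i" "\<sigma> j"] \<sigma>G[OF i] \<sigma>G[OF j] bij_betwE[OF \<sigma>] i j that by blast
    then show "?R $$ (i, j) = four_block_mat B (0\<^sub>m k (n - k)) (0\<^sub>m (n - k) k) Z $$ (i, j)"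
      using i j kn unfolding B_def Z_def by auto
  qed (use B Z kn in auto)
  obtain es where es: "char_poly B = (\<Prod>a\<leftarrow>es. [:- a, 1:])" "length es = k"
    using char_poly_factorized[OF B] by blast
  have "char_poly ?R = char_poly B * char_poly Z"
    using char_poly_0_block[OF blocks _ _ B zero_carrier_mat Z] es(1) char_poly_zero_mat
    unfolding Z_def by blast
  then have "char_poly A = (\<Prod>a\<leftarrow>es @ replicate (n - k) 0. [:- a, 1:])"
    using char_poly_similar[OF similar_mat_reindex[OF A \<sigma>]] es(1)
      char_poly_zero_mat[where 'a = complex, of "n - k"]
    unfolding Z_def by simp
  then show ?thesis using es(2) unfolding k_def by blast
qed

lemma vn_entropy_le_log_card_support:
  assumes \<rho>: "density_op N \<rho>" and G: "G \<subseteq> {..<2 ^ N}"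
    and diag: "\<And>i. i < 2 ^ N \<Longrightarrow> i \<notin> G \<Longrightarrow> \<rho> $$ (i, i) = 0"
  shows "vn_entropy \<rho> \<le> log 2 (card G)"
proof -
  let ?n = "2 ^ N :: nat"
  from \<rho> have car: "\<rho> \<in> carrier_mat ?n ?n" and psd: "psd ?n \<rho>"
    and trace: "(\<Sum>i<?n. \<rho> $$ (i, i)) = 1"
    by (auto simp: density_op_iff)
  have "\<rho> $$ (i, j) = 0" if "i < ?n" "j < ?n" "i \<notin> G \<or> j \<notin> G" for i j
    using that psd_zero_diag[OF psd, of i j] psd_zero_diag[OF psd, of j i] diag by blast
  then obtain es where len: "length es = card G"
    and cp: "char_poly \<rho> = (\<Prod>a\<leftarrow>es @ replicate (?n - card G) 0. [:- a, 1:])"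
    using char_poly_vanishing_outside[OF car G] by blast
  have "vn_entropy \<rho> = - (\<Sum>a\<leftarrow>es. xlogx (Re a))"
    using vn_entropy_eq_sum_list[OF cp] by (simp add: xlogx_def sum_list_replicate)
  moreover have "(\<Sum>a\<leftarrow>es. Re a) = 1"
    using sum_eigenvalues_eq_diag_sum[OF car cp] trace by (simp add: sum_list_replicate flip: Re_sum_list)
  moreover have "Re a \<ge> 0" if "a \<in> set es" for a
    using psd_eigenvalue_nonneg[OF psd car] that unfolding cp poly_prod_linear_eq_0_iff by auto
  ultimately show ?thesis
    using entropy_le_log_length[of "map Re es"] len by (auto simp: comp_def)
qed

lemma vn_entropy_mat_diag:
  "vn_entropy (mat_diag n (\<lambda>i. complex_of_real (d i))) = - (\<Sum>i<n. xlogx (d i))"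
proof -
  let ?D = "mat_diag n (\<lambda>i. complex_of_real (d i))"
  have "char_poly ?D = (\<Prod>a\<leftarrow>diag_mat ?D. [:- a, 1:])"
    by (rule char_poly_upper_triangular[OF mat_diag_dim]) (simp add: upper_triangular_def mat_diag_def)
  from vn_entropy_eq_sum_list[OF this] show ?thesis
    by (simp add: diag_mat_def mat_diag_def sum_list_sum_nth atLeast0LessThan)
qed

lemma psd_mat_diag:
  assumes "\<And>i. i < n \<Longrightarrow> d i \<ge> 0"
  shows "psd n (mat_diag n (\<lambda>i. complex_of_real (d i)))"
  unfolding psd_def
proof
  fix v :: "nat \<Rightarrow> complex"
  have "qform n (mat_diag n (\<lambda>i. complex_of_real (d i))) v = (\<Sum>i<n. of_real (d i) * (v i * cnj (v i)))"
    unfolding qform_def mat_diag_def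
    by (intro sum.cong refl) (simp add: if_distrib[of "\<lambda>x. _ * x * _"] cong: if_cong)
  also have "\<dots> = of_real (\<Sum>i<n. d i * (cmod (v i))\<^sup>2)"
    by (simp only: complex_norm_square of_real_sum of_real_mult)
  finally have "qform n (mat_diag n (\<lambda>i. complex_of_real (d i))) v =
                of_real (\<Sum>i<n. d i * (cmod (v i))\<^sup>2)" .
  moreover have "(\<Sum>i<n. d i * (cmod (v i))\<^sup>2) \<ge> 0"
    using assms by (intro sum_nonneg) auto
  ultimately show "Im (qform n (mat_diag n (\<lambda>i. complex_of_real (d i))) v) = 0 \<and>
      Re (qform n (mat_diag n (\<lambda>i. complex_of_real (d i))) v) \<ge> 0"
    by simp
qed

section \<open>Basis indices and partial traces\<close>

lemma bit_of_eq_of_bool: "bit_of q i = of_bool (bit i q)"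
  unfolding bit_of_def bit_iff_odd by (simp add: mod_2_eq_odd)

lemma sum_of_bits_eq_horner_sum:
  "(\<Sum>q<n. of_bool (P q) * 2 ^ q :: nat) = horner_sum of_bool 2 (map P [0..<n])"
  by (simp add: horner_sum_eq_sum atLeast0LessThan)

lemma bit_sum_of_bits: "bit (\<Sum>q<n. of_bool (P q) * 2 ^ q :: nat) k \<longleftrightarrow> k < n \<and> P k"
  unfolding sum_of_bits_eq_horner_sum by (auto simp: bit_horner_sum_bit_iff)

lemma sum_of_bits_less: "(\<Sum>q<n. of_bool (P q) * 2 ^ q :: nat) < 2 ^ n"
  unfolding sum_of_bits_eq_horner_sum using horner_sum_of_bool_2_less[of "map P [0..<n]"] by simp

lemma bit_less_pow2: "(x::nat) < 2 ^ n \<Longrightarrow> bit x q \<Longrightarrow> q < n"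
  by (metis bit_take_bit_iff take_bit_nat_eq_self_iff)

lemma pos_in_less_card: "finite S \<Longrightarrow> x \<in> S \<Longrightarrow> pos_in S x < card S"
  unfolding pos_in_def by (rule psubset_card_mono) auto

lemma inj_on_pos_in:
  assumes "finite S"
  shows "inj_on (pos_in S) S"
proof (rule inj_onI)
  have mono: "pos_in S x < pos_in S y" if "x \<in> S" "y \<in> S" "x < y" for x y
    unfolding pos_in_def using assms that by (intro psubset_card_mono) auto
  fix x y assume "x \<in> S" "y \<in> S" "pos_in S x = pos_in S y"
  then show "x = y" using mono by (metis less_irrefl linorder_neqE_nat)
qed

lemma merge_idx_eq_sum_of_bits:
  "merge_idx N T r t = (\<Sum>q<N. of_bool (if q \<in> T then bit t (pos_in T q)
                                    else bit r (pos_in ({0..<N} - T) q)) * 2 ^ q)"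
  unfolding merge_idx_def bit_of_eq_of_bool by (intro sum.cong) auto

lemma bit_merge_idx:
  "bit (merge_idx N T r t) q \<longleftrightarrow>
     q < N \<and> (if q \<in> T then bit t (pos_in T q) else bit r (pos_in ({0..<N} - T) q))"
  unfolding merge_idx_eq_sum_of_bits bit_sum_of_bits ..

lemma merge_idx_less: "merge_idx N T r t < 2 ^ N"
  unfolding merge_idx_eq_sum_of_bits by (rule sum_of_bits_less)

text \<open>The bits of \<open>i\<close> at the positions in \<open>S\<close>, packed in increasing order; this inverts
  \<^const>\<open>merge_idx\<close>.\<close>

definition restrict_idx :: "nat set \<Rightarrow> nat \<Rightarrow> nat" where
  "restrict_idx S i = (\<Sum>k<card S. of_bool (bit i (inv_into S (pos_in S) k)) * 2 ^ k)"

lemma restrict_idx_less: "restrict_idx S i < 2 ^ card S"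
  unfolding restrict_idx_def by (rule sum_of_bits_less)

lemma bit_restrict_idx:
  assumes "finite S" "q \<in> S"
  shows "bit (restrict_idx S i) (pos_in S q) \<longleftrightarrow> bit i q"
  unfolding restrict_idx_def bit_sum_of_bits
  using assms pos_in_less_card inv_into_f_f[OF inj_on_pos_in] by simp

lemma merge_idx_restrict_idx:
  assumes "finite T" "i < 2 ^ N"
  shows "merge_idx N T (restrict_idx ({0..<N} - T) i) (restrict_idx T i) = i"
proof (rule bit_eqI)
  fix q
  show "bit (merge_idx N T (restrict_idx ({0..<N} - T) i) (restrict_idx T i)) q \<longleftrightarrow> bit i q"
    using assms bit_less_pow2[OF assms(2), of q]
    by (auto simp: bit_merge_idx bit_restrict_idx)
qed

lemma ptrace_diag_eq_0:
  assumes \<rho>: "density_op N \<rho>" and r: "r < 2 ^ card ({0..<N} - T)"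
    and zero: "ptrace N T \<rho> $$ (r, r) = 0" and t: "t < 2 ^ card T"
  shows "\<rho> $$ (merge_idx N T r t, merge_idx N T r t) = 0"
proof -
  define f where "f t = \<rho> $$ (merge_idx N T r t, merge_idx N T r t)" for t
  have nonneg: "Im (f t) = 0 \<and> Re (f t) \<ge> 0" for t
    unfolding f_def using \<rho> psd_diag_nonneg merge_idx_less by (auto simp: density_op_iff)
  have "(\<Sum>t < 2 ^ card T. Re (f t)) = 0"
    using zero r unfolding ptrace_def f_def by (simp flip: Re_sum)
  then have "Re (f t) = 0"
    using t nonneg by (subst (asm) sum_nonneg_eq_0_iff) auto
  then show ?thesis using nonneg[of t] unfolding f_def by (simp add: complex_eq_iff)
qed

section \<open>Powers of the GHZ state\<close>

lemma div_less_of_less_mult: "q < m * p \<Longrightarrow> q div m < (p::nat)"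
  by (simp add: less_mult_imp_div_less mult.commute)

lemma mult_add_less_mult:
  fixes a j m p :: nat
  assumes "a < m" "j < p"
  shows "m * j + a < m * p"
proof -
  have "m * j + a < m * Suc j" using assms(1) by simp
  also have "\<dots> \<le> m * p" using assms(2) by (intro mult_le_mono2) simp
  finally show ?thesis .
qed

lemma party_qubits_iff:
  assumes "a < m"
  shows "q \<in> party_qubits m p a \<longleftrightarrow> q < m * p \<and> q mod m = a"
proof
  assume "q \<in> party_qubits m p a"
  then obtain j where j: "j < p" "q = m * j + a" unfolding party_qubits_def by (auto simp: mult.commute)
  then show "q < m * p \<and> q mod m = a" using assms mult_add_less_mult by simp
next
  assume q: "q < m * p \<and> q mod m = a"
  then have "q div m < p" by (simp add: div_less_of_less_mult)
  moreover have "q = q div m * m + a" using q by (metis div_mult_mod_eq)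
  ultimately show "q \<in> party_qubits m p a" unfolding party_qubits_def by blast
qed

lemma finite_party_qubits: "finite (party_qubits m p a)"
  unfolding party_qubits_def by simp

definition ghz_index :: "nat \<Rightarrow> nat \<Rightarrow> nat \<Rightarrow> bool" where
  "ghz_index m p i \<longleftrightarrow> (\<forall>q < m * p. bit i q = bit i (m * (q div m)))"

definition ghz_support :: "nat \<Rightarrow> nat \<Rightarrow> nat set" where
  "ghz_support m p = {i. i < 2 ^ (m * p) \<and> ghz_index m p i}"

lemma ghz_index_iff_blocks:
  assumes "m > 0"
  shows "ghz_index m p i \<longleftrightarrow> (\<forall>j<p. \<forall>a<m. bit i (m * j + a) = bit i (m * j))"
proof
  assume i: "ghz_index m p i"
  show "\<forall>j<p. \<forall>a<m. bit i (m * j + a) = bit i (m * j)"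
  proof (intro allI impI)
    fix j a assume "j < p" "a < m"
    then have "m * j + a < m * p" by (rule mult_add_less_mult[rotated])
    moreover have "(m * j + a) div m = j" using \<open>a < m\<close> by simp
    ultimately show "bit i (m * j + a) = bit i (m * j)" using i unfolding ghz_index_def by metis
  qed
next
  assume blocks: "\<forall>j<p. \<forall>a<m. bit i (m * j + a) = bit i (m * j)"
  show "ghz_index m p i" unfolding ghz_index_def
  proof (intro allI impI)
    fix q assume "q < m * p"
    then have "q div m < p" by (rule div_less_of_less_mult)
    then show "bit i q = bit i (m * (q div m))"
      using blocks assms by (metis div_mult_mod_eq mod_less_divisor mult.commute)
  qed
qed

lemma ghz_amp_block:
  assumes "m > 0"
  shows "ghz_amp m ((i div 2 ^ (m * j)) mod 2 ^ m) =
           (if \<forall>a<m. bit i (m * j + a) = bit i (m * j) then complex_of_real (1 / sqrt 2) else 0)"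
proof -
  let ?b = "(i div 2 ^ (m * j)) mod 2 ^ m"
  have bit_b: "bit ?b a \<longleftrightarrow> a < m \<and> bit i (m * j + a)" for a
    by (simp add: drop_bit_eq_div[symmetric] take_bit_eq_mod[symmetric] bit_simps)
  have "?b = 0 \<longleftrightarrow> (\<forall>a<m. \<not> bit i (m * j + a))"
    by (auto simp: bit_eq_iff bit_b)
  moreover have "?b = 2 ^ m - 1 \<longleftrightarrow> (\<forall>a<m. bit i (m * j + a))"
    unfolding mask_eq_exp_minus_1[symmetric] bit_eq_iff[of ?b] by (auto simp: bit_b bit_mask_iff)
  ultimately have "?b = 0 \<or> ?b = 2 ^ m - 1 \<longleftrightarrow> (\<forall>a<m. bit i (m * j + a) = bit i (m * j))"
    using assms by (metis add_0_right)
  then show ?thesis unfolding ghz_amp_def by simp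
qed

lemma ghz_power_amp_eq:
  assumes "m > 0"
  shows "ghz_power_amp m p i = (if ghz_index m p i then complex_of_real (1 / sqrt 2) ^ p else 0)"
  unfolding ghz_power_amp_def ghz_amp_block[OF assms] ghz_index_iff_blocks[OF assms]
  by (auto simp: prod_zero_iff)

lemma ghz_power_dm_entry:
  assumes "m > 0" "i < 2 ^ (m * p)" "j < 2 ^ (m * p)"
  shows "ghz_power_dm m p $$ (i, j) =
           (if ghz_index m p i \<and> ghz_index m p j then complex_of_real ((1 / 2) ^ p) else 0)"
proof -
  have "(1 / sqrt 2) ^ p * (1 / sqrt 2) ^ p = ((1::real) / 2) ^ p"
    by (simp flip: power_mult_distrib add: power_divide)
  then have "complex_of_real (1 / sqrt 2) ^ p * cnj (complex_of_real (1 / sqrt 2) ^ p) =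
             complex_of_real ((1 / 2) ^ p)"
    by (metis complex_cnj_complex_of_real complex_cnj_power of_real_mult of_real_power)
  then show ?thesis
    using assms unfolding ghz_power_dm_def ghz_power_amp_eq[OF assms(1)] by simp
qed

text \<open>Each copy repeats one bit of a \<open>p\<close>-bit index \<open>m\<close> times.\<close>

lemma card_ghz_support:
  assumes "m > 0"
  shows "card (ghz_support m p) = 2 ^ p"
proof -
  define spread where "spread k = (\<Sum>q < m * p. of_bool (bit k (q div m)) * 2 ^ q :: nat)" for k :: nat
  define pick where "pick i = (\<Sum>j<p. of_bool (bit i (m * j)) * 2 ^ j :: nat)" for i :: nat
  have bit_spread: "bit (spread k) q \<longleftrightarrow> q < m * p \<and> bit k (q div m)" for k q
    unfolding spread_def bit_sum_of_bits ..
  have bit_pick: "bit (pick i) j \<longleftrightarrow> j < p \<and> bit i (m * j)" for i j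
    unfolding pick_def bit_sum_of_bits ..
  have "bij_betw spread {..<2 ^ p} (ghz_support m p)"
  proof (rule bij_betw_byWitness[where f' = pick])
    show "\<forall>k\<in>{..<2 ^ p}. pick (spread k) = k"
      using assms bit_less_pow2 by (auto intro!: bit_eqI simp: bit_pick bit_spread)
    show "\<forall>i\<in>ghz_support m p. spread (pick i) = i"
    proof (intro ballI bit_eqI)
      fix i q assume "i \<in> ghz_support m p"
      then have "i < 2 ^ (m * p)" "ghz_index m p i" unfolding ghz_support_def by auto
      moreover note div_less_of_less_mult[of q m p]
      ultimately show "bit (spread (pick i)) q \<longleftrightarrow> bit i q"
        using bit_less_pow2[of i "m * p" q] unfolding ghz_index_def
        by (auto simp: bit_spread bit_pick)
    qed
    have "ghz_index m p (spread k)" for k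
      unfolding ghz_index_def using assms
      by (auto simp: bit_spread div_less_of_less_mult intro: le_less_trans[of "m * (_ div m)"])
    then show "spread ` {..<2 ^ p} \<subseteq> ghz_support m p"
      unfolding ghz_support_def spread_def using sum_of_bits_less by auto
    show "pick ` ghz_support m p \<subseteq> {..<2 ^ p}"
      unfolding pick_def using sum_of_bits_less by auto
  qed
  then show ?thesis by (simp add: bij_betw_same_card[symmetric])
qed

lemma sum_ghz_support:
  fixes c :: "'a::comm_semiring_1"
  assumes "m > 0"
  shows "(\<Sum>i < 2 ^ (m * p). if ghz_index m p i then c else 0) = 2 ^ p * c"
proof -
  have "(\<Sum>i < 2 ^ (m * p). if ghz_index m p i then c else 0) = (\<Sum>i\<in>ghz_support m p. c)"
    unfolding ghz_support_def by (simp add: sum.If_cases Collect_conj_eq lessThan_def Int_commute)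
  then show ?thesis using card_ghz_support[OF assms] by simp
qed

section \<open>States compatible with the GHZ marginals\<close>

text \<open>A violated block constraint can be seen by a party holding neither of the two qubits
  involved; this needs a third party, hence \<open>m \<ge> 3\<close>.\<close>

lemma not_ghz_index_witness:
  assumes "m \<ge> 3" "\<not> ghz_index m p i"
  obtains a q where "a < m" "q < m * p" "bit i q \<noteq> bit i (m * (q div m))"
    "q \<notin> party_qubits m p a" "m * (q div m) \<notin> party_qubits m p a"
proof -
  obtain q where q: "q < m * p" "bit i q \<noteq> bit i (m * (q div m))"
    using assms(2) unfolding ghz_index_def by blast
  then have "q mod m \<noteq> 0" by (metis add_0_right div_mult_mod_eq mult.commute)
  define a where "a = (if q mod m = 1 then 2 else 1 :: nat)"
  have "a < m" "a \<noteq> q mod m" "a \<noteq> 0" using assms(1) unfolding a_def by auto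
  with q show thesis by (intro that[of a q]) (auto simp: party_qubits_iff)
qed

lemma compatible_states_diag_vanishes:
  assumes m: "m \<ge> 3" and \<rho>: "\<rho> \<in> compatible_states m p"
    and i: "i < 2 ^ (m * p)" and not_ghz: "\<not> ghz_index m p i"
  shows "\<rho> $$ (i, i) = 0"
proof -
  obtain a q where a: "a < m" and q: "q < m * p" and differ: "bit i q \<noteq> bit i (m * (q div m))"
    and kept: "q \<notin> party_qubits m p a" "m * (q div m) \<notin> party_qubits m p a"
    using not_ghz_index_witness[OF m not_ghz] .
  define N where "N = m * p"
  define T where "T = party_qubits m p a"
  define r where "r = restrict_idx ({0..<N} - T) i"
  have r: "r < 2 ^ card ({0..<N} - T)" unfolding r_def by (rule restrict_idx_less)
  have fin: "finite T" unfolding T_def by (rule finite_party_qubits)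
  have merge_i: "merge_idx N T r (restrict_idx T i) = i"
    using merge_idx_restrict_idx[OF fin i[folded N_def]] unfolding r_def .
  have kept_bits: "bit (merge_idx N T r t) x = bit i x" if "x \<in> {0..<N} - T" for x t
    using that bit_restrict_idx[of "{0..<N} - T" x i] unfolding r_def by (simp add: bit_merge_idx)
  have "m * (q div m) \<le> q" by simp
  then have "m * (q div m) < m * p" using q by linarith
  then have "q \<in> {0..<N} - T" "m * (q div m) \<in> {0..<N} - T"
    using q kept unfolding N_def T_def by auto
  then have "\<not> ghz_index m p (merge_idx N T r t)" for t
    using differ q kept_bits unfolding ghz_index_def by metis
  then have "ptrace N T (ghz_power_dm m p) $$ (r, r) = 0"
    using r m merge_idx_less unfolding ptrace_def by (simp add: ghz_power_dm_entry N_def)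
  moreover have "ptrace N T \<rho> = ptrace N T (ghz_power_dm m p)"
    using \<rho> a unfolding compatible_states_def N_def T_def by blast
  moreover have "density_op N \<rho>"
    using \<rho> unfolding compatible_states_def N_def by blast
  ultimately show ?thesis
    using ptrace_diag_eq_0[OF _ r _ restrict_idx_less] merge_i by metis
qed

lemma vn_entropy_compatible_states_le:
  assumes "m \<ge> 3" "\<rho> \<in> compatible_states m p"
  shows "vn_entropy \<rho> \<le> p"
proof -
  have "vn_entropy \<rho> \<le> log 2 (card (ghz_support m p))"
  proof (rule vn_entropy_le_log_card_support)
    show "density_op (m * p) \<rho>" using assms(2) unfolding compatible_states_def by blast
    show "ghz_support m p \<subseteq> {..<2 ^ (m * p)}" unfolding ghz_support_def by auto
    show "\<rho> $$ (i, i) = 0" if "i < 2 ^ (m * p)" "i \<notin> ghz_support m p" for i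
      using compatible_states_diag_vanishes[OF assms] that unfolding ghz_support_def by blast
  qed
  then show ?thesis using assms(1) by (simp add: card_ghz_support log_nat_power)
qed

lemma ghz_index_eq_if_agree_on_party:
  assumes "a < m" and x: "x < 2 ^ (m * p)" "ghz_index m p x" and y: "y < 2 ^ (m * p)" "ghz_index m p y"
    and agree: "\<And>q. q \<in> party_qubits m p a \<Longrightarrow> bit x q = bit y q"
  shows "x = y"
proof (rule bit_eqI)
  fix q
  show "bit x q \<longleftrightarrow> bit y q"
  proof (cases "q < m * p")
    case True
    define q' where "q' = m * (q div m) + a"
    have "q' < m * p"
      unfolding q'_def using \<open>a < m\<close> div_less_of_less_mult[OF True] by (rule mult_add_less_mult)
    moreover have "q' div m = q div m" "q' mod m = a" using \<open>a < m\<close> unfolding q'_def by auto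
    ultimately have "q' \<in> party_qubits m p a" "bit x q = bit x q'" "bit y q = bit y q'"
      using True x(2) y(2) \<open>a < m\<close> unfolding ghz_index_def by (simp_all add: party_qubits_iff)
    then show ?thesis using agree by simp
  next
    case False
    then show ?thesis using bit_less_pow2[OF x(1)] bit_less_pow2[OF y(1)] by blast
  qed
qed

definition ghz_dephased :: "nat \<Rightarrow> nat \<Rightarrow> complex mat" where
  "ghz_dephased m p =
     mat_diag (2 ^ (m * p)) (\<lambda>i. complex_of_real (if ghz_index m p i then (1 / 2) ^ p else 0))"

lemma density_op_ghz_dephased:
  assumes "m > 0"
  shows "density_op (m * p) (ghz_dephased m p)"
  unfolding density_op_iff ghz_dephased_def
proof (intro conjI)
  show "psd (2 ^ (m * p)) (mat_diag (2 ^ (m * p))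
          (\<lambda>i. complex_of_real (if ghz_index m p i then (1 / 2) ^ p else 0)))"
    by (rule psd_mat_diag) simp
  have "(\<Sum>i < 2 ^ (m * p). if ghz_index m p i then complex_of_real ((1 / 2) ^ p) else 0) = 1"
    using sum_ghz_support[OF assms, where c = "complex_of_real ((1 / 2) ^ p)"]
    by (simp flip: power_mult_distrib)
  then show "(\<Sum>i < 2 ^ (m * p). mat_diag (2 ^ (m * p))
      (\<lambda>i. complex_of_real (if ghz_index m p i then (1 / 2) ^ p else 0)) $$ (i, i)) = 1"
    by (simp add: mat_diag_def if_distrib[of complex_of_real] cong: if_cong)
qed auto

lemma ghz_dephased_in_compatible_states:
  assumes "m > 0"
  shows "ghz_dephased m p \<in> compatible_states m p"
  unfolding compatible_states_def
proof (intro CollectI conjI allI impI density_op_ghz_dephased[OF assms])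
  fix a assume "a < m"
  define N where "N = m * p"
  define T where "T = party_qubits m p a"
  have "ghz_dephased m p $$ (merge_idx N T r t, merge_idx N T r' t) =
        ghz_power_dm m p $$ (merge_idx N T r t, merge_idx N T r' t)" for r r' t
  proof -
    let ?x = "merge_idx N T r t" and ?y = "merge_idx N T r' t"
    have x: "?x < 2 ^ (m * p)" and y: "?y < 2 ^ (m * p)"
      unfolding N_def by (rule merge_idx_less)+
    have "?x = ?y" if "ghz_index m p ?x" "ghz_index m p ?y"
      using ghz_index_eq_if_agree_on_party[OF \<open>a < m\<close> x that(1) y that(2)]
      unfolding T_def by (simp add: bit_merge_idx)
    then show ?thesis
      using x y assms unfolding ghz_dephased_def mat_diag_def by (auto simp: ghz_power_dm_entry)
  qed
  then show "ptrace (m * p) (party_qubits m p a) (ghz_dephased m p) =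
             ptrace (m * p) (party_qubits m p a) (ghz_power_dm m p)"
    unfolding ptrace_def N_def T_def by (intro cong_mat refl) simp
qed

lemma vn_entropy_ghz_dephased:
  assumes "m > 0"
  shows "vn_entropy (ghz_dephased m p) = p"
proof -
  have "xlogx 0 = 0" by (simp add: xlogx_def)
  then have "vn_entropy (ghz_dephased m p) = - (2 ^ p * xlogx ((1 / 2) ^ p))"
    unfolding ghz_dephased_def vn_entropy_mat_diag
    by (simp add: if_distrib[of xlogx] sum_ghz_support[OF assms] cong: if_cong)
  also have "\<dots> = p"
    by (simp add: xlogx_def log_nat_power log_divide power_mult_distrib[symmetric])
  finally show ?thesis .
qed

theorem mainTheorem9:
  fixes m p :: nat
  assumes "m \<ge> 3"
  shows "(\<exists>\<rho> \<in> compatible_states m p. vn_entropy \<rho> = real p) \<and>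
         (\<forall>\<rho> \<in> compatible_states m p. vn_entropy \<rho> \<le> real p)"
proof
  have "m > 0" using assms by simp
  then show "\<exists>\<rho> \<in> compatible_states m p. vn_entropy \<rho> = real p"
    using ghz_dephased_in_compatible_states vn_entropy_ghz_dephased by blast
  show "\<forall>\<rho> \<in> compatible_states m p. vn_entropy \<rho> \<le> real p"
    using vn_entropy_compatible_states_le[OF assms] by blast
qed

end
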